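(* Let $0<q<1$ and let $x,y$ be real numbers with $|x|<1$ and $|y|<1$. Then \[ \sum_{m=0}^\infty\sum_{n=0}^\infty (-1)^{m+n}[x]_q^{m+1}[y]_q^{n+1}\,\zeta[m+2,\{1\}^n] = 1-\frac{\Gamma_q(1+x)\,\Gamma_q(1+y)}{\Gamma_q(1+x+y)}. \]
   Context: Fix $0<q<1$ and for real $x$ put $[x]_q := (1-q^x)/(1-q)$. For positive integers $s_1,\dots,s_N$ with $s_1>1$, $\zeta[s_1,\dots,s_N] := \sum_{k_1>\cdots>k_N>0}\prod_{j=1}^N q^{(s_j-1)k_j}/[k_j]_q^{s_j}$ (sum over positive integers); $\{1\}^n$ denotes $n$ consecutive copies of $1$. For real $a,b$ put $(a+b)_q^\infty := \prod_{k=0}^\infty(a+bq^k)$. The $q$-gamma function is $\Gamma_q(x) := \dfrac{(1-q)_q^\infty\,(1-q)^{1-x}}{(1-q^x)_q^\infty}$, i.e. $\Gamma_q(x)=(1-q)^{1-x}\prod_{k\ge0}\frac{1-q^{k+1}}{1-q^{k+x}}$. *)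

theory Defs
  imports "HOL-Analysis.Analysis"
begin

definition qbr :: "real \<Rightarrow> real \<Rightarrow> real" where
  "qbr q x = (1 - q powr x) / (1 - q)"

definition qzeta :: "real \<Rightarrow> nat list \<Rightarrow> real" where
  "qzeta q s = infsum
     (\<lambda>ks. \<Prod>j<length s. q ^ ((s ! j - 1) * (ks ! j)) / (qbr q (real (ks ! j))) ^ (s ! j))
     {ks. length ks = length s \<and> sorted_wrt (>) ks \<and> (\<forall>k\<in>set ks. k > 0)}"

definition qpoch_inf :: "real \<Rightarrow> real \<Rightarrow> real \<Rightarrow> real" where
  "qpoch_inf q a b = (\<Prod>k. a + b * q ^ k)"

definition qGamma :: "real \<Rightarrow> real \<Rightarrow> real" where
  "qGamma q x = qpoch_inf q 1 (- q) * (1 - q) powr (1 - x) / qpoch_inf q 1 (- (q powr x))"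

end

theory Submission
  imports Defs
begin

(* Expanding every value zeta[m+2,{1}^n] over its chains k > k_2 > ... > k_(n+1) > 0 turns the
   left-hand side into a triple series over (m, k, S), where S = {k_2, ..., k_(n+1)}.  Write
   a = q^x, b = q^y, so that [x]_q = (1 - a)/(1 - q) and [y]_q = (1 - b)/(1 - q).  For fixed k
   the sum over m is geometric and the sum over the subsets S of {1..k-1} is a finite product;
   together they give
     (1 - a)(1 - b) (q/b;q)_(k-1) b^(k-1) / (q;q)_(k-1) * q^k / ((1 - q^k)(1 - a q^k)).
   Expanding the last factor as a power series in q^k, interchanging the two summations and using
   the q-binomial theorem twice sums this over k to 1 - (q;q)(abq;q) / ((aq;q)(bq;q)), which is
   the Gamma_q ratio.  All interchanges are justified by absolute convergence: replacing [x]_q and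
   [y]_q by -|[x]_q| and -|[y]_q| makes every term nonnegative and amounts to replacing a and b by
   1 + |1 - a| and 1 + |1 - b|, to which the same computation applies. *)


section \<open>q-Pochhammer symbols\<close>

definition qpochhammer :: "real \<Rightarrow> real \<Rightarrow> nat \<Rightarrow> real" where
  "qpochhammer q c n = (\<Prod>j<n. 1 - c * q ^ j)"

definition qpochhammer_inf :: "real \<Rightarrow> real \<Rightarrow> real" where
  "qpochhammer_inf q c = (\<Prod>k. 1 - c * q ^ k)"

lemma qpoch_inf_eq_qpochhammer_inf: "qpoch_inf q 1 (- c) = qpochhammer_inf q c"
  by (simp add: qpoch_inf_def qpochhammer_inf_def)

lemma qpochhammer_0 [simp]: "qpochhammer q c 0 = 1"
  by (simp add: qpochhammer_def)

lemma qpochhammer_Suc: "qpochhammer q c (Suc n) = qpochhammer q c n * (1 - c * q ^ n)"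
  by (simp add: qpochhammer_def)

lemma qpochhammer_Suc_shift: "qpochhammer q c (Suc n) = (1 - c) * qpochhammer q (c * q) n"
  unfolding qpochhammer_def by (subst prod.lessThan_Suc_shift) (simp add: mult_ac)

lemma mult_power_less_one:
  fixes q c :: real
  assumes "0 \<le> q" "q \<le> 1" "c < 1"
  shows "c * q ^ j < 1"
proof (cases "c \<le> 0")
  case True
  then have "c * q ^ j \<le> 0" using assms by (simp add: mult_nonpos_nonneg)
  then show ?thesis by linarith
next
  case False
  then have "c * q ^ j \<le> c" using assms by (simp add: mult_left_le power_le_one)
  then show ?thesis using assms by linarith
qed

lemma qpochhammer_pos:
  fixes q c :: real
  assumes "0 \<le> q" "q \<le> 1" "c < 1"
  shows "qpochhammer q c n > 0"
  unfolding qpochhammer_def using mult_power_less_one[OF assms] by (intro prod_pos) auto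

lemma convergent_prod_qpochhammer:
  fixes q c :: real
  assumes "\<bar>q\<bar> < 1"
  shows "convergent_prod (\<lambda>k. 1 - c * q ^ k)"
proof -
  have "summable (\<lambda>k. norm ((1 - c * q ^ k) - 1))"
    using assms by (simp add: abs_mult power_abs summable_mult summable_geometric)
  then show ?thesis
    by (intro abs_convergent_prod_imp_convergent_prod summable_imp_abs_convergent_prod)
qed

lemma qpochhammer_LIMSEQ:
  fixes q c :: real
  assumes "\<bar>q\<bar> < 1"
  shows "(\<lambda>n. qpochhammer q c n) \<longlonglongrightarrow> qpochhammer_inf q c"
proof -
  have "(\<lambda>n. qpochhammer q c (Suc n)) \<longlonglongrightarrow> qpochhammer_inf q c"
    using convergent_prod_LIMSEQ[OF convergent_prod_qpochhammer[OF assms]]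
    by (simp add: qpochhammer_def qpochhammer_inf_def lessThan_Suc_atMost)
  then show ?thesis by (rule LIMSEQ_imp_Suc)
qed

lemma qpochhammer_inf_nonzero:
  fixes q c :: real
  assumes "0 \<le> q" "q < 1" "c < 1"
  shows "qpochhammer_inf q c \<noteq> 0"
  unfolding qpochhammer_inf_def using assms mult_power_less_one[of q c]
  by (intro prodinf_nonzero convergent_prod_qpochhammer) (auto simp: less_imp_neq)

lemma qpochhammer_inf_split:
  fixes q c :: real
  assumes "0 \<le> q" "q < 1" "c < 1"
  shows "qpochhammer_inf q c = qpochhammer q c n * qpochhammer_inf q (c * q ^ n)"
proof -
  have "qpochhammer_inf q c = (\<Prod>k. 1 - c * q ^ (k + n)) * qpochhammer q c n"
    unfolding qpochhammer_inf_def qpochhammer_def using assms mult_power_less_one[of q c]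
    by (intro prodinf_split_initial_segment convergent_prod_qpochhammer) (auto simp: less_imp_neq)
  then show ?thesis
    by (simp add: qpochhammer_inf_def power_add mult_ac)
qed

section \<open>The q-binomial theorem\<close>

definition qbinomial_series :: "real \<Rightarrow> real \<Rightarrow> real \<Rightarrow> real" where
  "qbinomial_series q c z = (\<Sum>n. qpochhammer q c n / qpochhammer q q n * z ^ n)"

lemma summable_qbinomial_series:
  fixes q c z :: real
  assumes "0 < q" "q < 1" "\<bar>z\<bar> < 1"
  shows "summable (\<lambda>n. qpochhammer q c n / qpochhammer q q n * z ^ n)"
proof -
  define A where "A n = qpochhammer q c n / qpochhammer q q n" for n
  have "A \<longlonglongrightarrow> qpochhammer_inf q c / qpochhammer_inf q q"
    unfolding A_def using assms qpochhammer_inf_nonzero[of q q]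
    by (intro tendsto_divide qpochhammer_LIMSEQ) auto
  then have "Bseq A"
    by (rule convergent_imp_Bseq[OF convergentI])
  then obtain B where B: "\<And>n. norm (A n) \<le> B"
    by (auto simp: Bseq_def)
  have "summable (\<lambda>n. A n * z ^ n)"
  proof (rule summable_comparison_test)
    show "\<exists>N. \<forall>n\<ge>N. norm (A n * z ^ n) \<le> B * \<bar>z\<bar> ^ n"
      using B by (auto simp: abs_mult power_abs intro!: mult_right_mono)
    show "summable (\<lambda>n. B * \<bar>z\<bar> ^ n)"
      using assms by (intro summable_mult summable_geometric) auto
  qed
  then show ?thesis by (simp add: A_def)
qed

lemma qbinomial_coeff_Suc:
  fixes q c :: real
  assumes "0 < q" "q < 1"
  shows "qpochhammer q c (Suc n) / qpochhammer q q (Suc n) * (1 - q ^ Suc n)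
           = qpochhammer q c n / qpochhammer q q n * (1 - c * q ^ n)"
proof -
  define r where "r = q ^ Suc n"
  have "r < 1" unfolding r_def using assms by (rule power_Suc_less_one)
  moreover have "qpochhammer q q n > 0" using assms by (intro qpochhammer_pos) auto
  moreover have "qpochhammer q q (Suc n) = qpochhammer q q n * (1 - r)"
    by (simp add: qpochhammer_Suc r_def)
  ultimately show ?thesis by (simp add: qpochhammer_Suc r_def[symmetric])
qed

lemma abs_power_mult_less_one:
  fixes q z :: real
  assumes "\<bar>q\<bar> \<le> 1" "\<bar>z\<bar> < 1"
  shows "\<bar>q ^ n * z\<bar> < 1"
proof -
  have "\<bar>q\<bar> ^ n * \<bar>z\<bar> \<le> \<bar>z\<bar>"
    using assms by (intro mult_left_le_one_le) (auto simp: power_le_one)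
  then show ?thesis
    using assms by (simp add: abs_mult power_abs)
qed

lemma qbinomial_series_functional_eq:
  fixes q c z :: real
  assumes q: "0 < q" "q < 1" and z: "\<bar>z\<bar> < 1"
  shows "(1 - z) * qbinomial_series q c z = (1 - c * z) * qbinomial_series q c (q * z)"
proof -
  define A where "A n = qpochhammer q c n / qpochhammer q q n" for n
  define f where "f = qbinomial_series q c"
  have "\<bar>q * z\<bar> < 1"
    using abs_power_mult_less_one[of q z 1] q z by simp
  then have f: "(\<lambda>n. A n * w ^ n) sums f w" if "w \<in> {z, q * z}" for w
    using that z summable_qbinomial_series[OF q]
    by (auto simp: f_def qbinomial_series_def A_def)
  have "(\<lambda>n. A n * z ^ n - A n * (q * z) ^ n) sums (f z - f (q * z))"
    using f by (intro sums_diff) auto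
  then have "(\<lambda>n. A (Suc n) * z ^ Suc n - A (Suc n) * (q * z) ^ Suc n) sums (f z - f (q * z))"
    by (subst sums_Suc_iff) simp
  moreover have "(\<lambda>n. z * (A n * z ^ n - c * (A n * (q * z) ^ n))) sums (z * (f z - c * f (q * z)))"
    using f by (intro sums_mult sums_diff) auto
  moreover have "A (Suc n) * z ^ Suc n - A (Suc n) * (q * z) ^ Suc n
                   = z * (A n * z ^ n - c * (A n * (q * z) ^ n))" for n
  proof -
    have "A (Suc n) * z ^ Suc n - A (Suc n) * (q * z) ^ Suc n = A (Suc n) * (1 - q ^ Suc n) * z ^ Suc n"
      by (simp add: algebra_simps)
    also have "\<dots> = A n * (1 - c * q ^ n) * z ^ Suc n"
      unfolding A_def using qbinomial_coeff_Suc[OF q] by (simp del: power_Suc)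
    finally show ?thesis by (simp add: algebra_simps)
  qed
  ultimately have "f z - f (q * z) = z * (f z - c * f (q * z))"
    by (simp add: sums_unique2)
  then show ?thesis unfolding f_def by (simp add: algebra_simps)
qed

lemma qbinomial_series_iterate:
  fixes q c z :: real
  assumes q: "0 < q" "q < 1" and z: "\<bar>z\<bar> < 1"
  shows "qpochhammer q z N * qbinomial_series q c z
           = qpochhammer q (c * z) N * qbinomial_series q c (q ^ N * z)"
proof (induction N)
  case (Suc N)
  have qNz: "\<bar>q ^ N * z\<bar> < 1" using q z by (intro abs_power_mult_less_one) auto
  have "qpochhammer q z (Suc N) * qbinomial_series q c z
          = (1 - q ^ N * z) * (qpochhammer q z N * qbinomial_series q c z)"
    by (simp add: qpochhammer_Suc mult_ac)
  also have "\<dots> = qpochhammer q (c * z) N * ((1 - q ^ N * z) * qbinomial_series q c (q ^ N * z))"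
    by (simp add: Suc.IH)
  also have "\<dots> = qpochhammer q (c * z) N * ((1 - c * (q ^ N * z)) * qbinomial_series q c (q ^ Suc N * z))"
    using qbinomial_series_functional_eq[OF q qNz] by (simp add: mult.assoc)
  also have "\<dots> = qpochhammer q (c * z) (Suc N) * qbinomial_series q c (q ^ Suc N * z)"
    by (simp add: qpochhammer_Suc mult_ac)
  finally show ?case .
qed simp

lemma isCont_qbinomial_series_0:
  fixes q c :: real
  assumes "0 < q" "q < 1"
  shows "isCont (qbinomial_series q c) 0"
  unfolding qbinomial_series_def[abs_def]
  by (rule isCont_powser[of _ "1/2"]) (use summable_qbinomial_series[OF assms, of "1/2"] in auto)

theorem qbinomial_theorem:
  fixes q c z :: real
  assumes q: "0 < q" "q < 1" and z: "\<bar>z\<bar> < 1"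
  shows "(\<lambda>n. qpochhammer q c n / qpochhammer q q n * z ^ n)
           sums (qpochhammer_inf q (c * z) / qpochhammer_inf q z)"
proof -
  define f where "f = qbinomial_series q c"
  have "(\<lambda>N. q ^ N * z) \<longlonglongrightarrow> 0"
    using q by (intro tendsto_mult_left_zero LIMSEQ_power_zero) auto
  then have "(\<lambda>N. f (q ^ N * z)) \<longlonglongrightarrow> f 0"
    using isCont_qbinomial_series_0[OF q] isCont_tendsto_compose unfolding f_def by blast
  moreover have "f 0 = 1"
    unfolding f_def qbinomial_series_def by (subst powser_zero) simp
  ultimately have "(\<lambda>N. qpochhammer q (c * z) N * f (q ^ N * z)) \<longlonglongrightarrow> qpochhammer_inf q (c * z) * 1"
    using q by (intro tendsto_mult qpochhammer_LIMSEQ) auto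
  moreover have "(\<lambda>N. qpochhammer q z N * f z) \<longlonglongrightarrow> qpochhammer_inf q z * f z"
    using q by (intro tendsto_mult qpochhammer_LIMSEQ tendsto_const) auto
  ultimately have "qpochhammer_inf q z * f z = qpochhammer_inf q (c * z)"
    using qbinomial_series_iterate[OF q z] LIMSEQ_unique unfolding f_def by fastforce
  moreover have "qpochhammer_inf q z \<noteq> 0"
    using q z by (intro qpochhammer_inf_nonzero) auto
  ultimately have "f z = qpochhammer_inf q (c * z) / qpochhammer_inf q z"
    by (simp add: field_simps)
  then show ?thesis
    using summable_sums[OF summable_qbinomial_series[OF q z, of c]] by (simp only: f_def qbinomial_series_def)
qed

section \<open>Interchanging summations\<close>

lemma has_sum_swap_nonneg:
  fixes H :: "'a \<Rightarrow> 'b \<Rightarrow> real"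
  assumes nonneg: "\<And>x y. x \<in> A \<Longrightarrow> y \<in> B \<Longrightarrow> H x y \<ge> 0"
    and rows: "\<And>x. x \<in> A \<Longrightarrow> (H x has_sum R x) B"
    and R: "(R has_sum S) A"
    and cols: "\<And>y. y \<in> B \<Longrightarrow> ((\<lambda>x. H x y) has_sum C y) A"
  shows "(C has_sum S) B"
proof -
  have "(\<lambda>(x, y). H x y) summable_on A \<times> B"
    using nonneg rows R by (intro summable_on_SigmaI[where g = R]) (auto dest: has_sum_imp_summable)
  then have "((\<lambda>(x, y). H x y) has_sum S) (A \<times> B)"
    using rows R by (intro has_sum_SigmaI) auto
  then have "((\<lambda>(y, x). H x y) has_sum S) (B \<times> A)"
    by (subst (asm) has_sum_swap) simp
  then show ?thesis
    by (rule has_sum_SigmaD) (use cols in auto)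
qed

lemma has_sum_UnionD:
  fixes f :: "'a \<Rightarrow> 'c :: {topological_comm_monoid_add, t3_space}"
  assumes "(f has_sum S) (\<Union>x\<in>A. B x)" "disjoint_family_on B A"
    and "\<And>x. x \<in> A \<Longrightarrow> (f has_sum g x) (B x)"
  shows "(g has_sum S) A"
proof -
  have "inj_on snd (Sigma A B)"
    using assms(2) by (force simp: disjoint_family_on_def inj_on_def)
  moreover have "snd ` Sigma A B = (\<Union>x\<in>A. B x)"
    by force
  ultimately have "((f \<circ> snd) has_sum S) (Sigma A B)"
    using has_sum_reindex[of snd "Sigma A B" f] assms(1) by simp
  then show ?thesis
    by (rule has_sum_SigmaD) (use assms(3) in \<open>auto simp: o_def\<close>)
qed

lemma has_sum_times_finite:
  fixes f g :: "_ \<Rightarrow> real"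
  assumes "(f has_sum S) A" "finite B"
  shows "((\<lambda>(x, y). f x * g y) has_sum (S * sum g B)) (A \<times> B)"
proof -
  have "((\<lambda>(x, y). f x * g y) has_sum (S * g y)) (A \<times> {y})" for y
  proof -
    have "((\<lambda>x. f x * g y) has_sum (S * g y)) A"
      using assms(1) by (rule has_sum_cmult_left)
    then show ?thesis
      by (subst has_sum_reindex_bij_betw[where g = "\<lambda>x. (x, y)", symmetric])
         (auto intro: bij_betwI')
  qed
  then have "((\<lambda>(x, y). f x * g y) has_sum (\<Sum>y\<in>B. S * g y)) (\<Union>y\<in>B. A \<times> {y})"
    using assms(2) by (intro sum_has_sum) auto
  moreover have "(\<Union>y\<in>B. A \<times> {y}) = A \<times> B"
    by auto
  ultimately show ?thesis
    by (simp add: sum_distrib_left)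
qed

lemma has_sum_gp_sum_times_power:
  fixes a \<rho> :: real
  assumes "0 < a" "a \<noteq> 1" "0 \<le> \<rho>" "\<rho> < 1" "a * \<rho> < 1"
  shows "((\<lambda>r. (\<Sum>i<r. a ^ i) * \<rho> ^ r) has_sum (\<rho> / ((1 - \<rho>) * (1 - a * \<rho>)))) UNIV"
proof -
  have "(\<lambda>r. (\<rho> ^ r - (a * \<rho>) ^ r) / (1 - a)) sums ((1 / (1 - \<rho>) - 1 / (1 - a * \<rho>)) / (1 - a))"
    using assms by (intro sums_divide sums_diff geometric_sums) (auto simp: abs_mult)
  moreover have "(\<rho> ^ r - (a * \<rho>) ^ r) / (1 - a) = (\<Sum>i<r. a ^ i) * \<rho> ^ r" for r
    using assms by (simp add: sum_gp_strict power_mult_distrib field_simps)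
  moreover have "(1 / (1 - \<rho>) - 1 / (1 - a * \<rho>)) / (1 - a) = \<rho> / ((1 - \<rho>) * (1 - a * \<rho>))"
  proof -
    have "1 - \<rho> \<noteq> 0" "1 - a * \<rho> \<noteq> 0" "1 - a \<noteq> 0"
      using assms by auto
    then have "1 / (1 - \<rho>) - 1 / (1 - a * \<rho>) = \<rho> * (1 - a) / ((1 - \<rho>) * (1 - a * \<rho>))"
      by (simp add: field_simps)
    then show ?thesis using \<open>1 - a \<noteq> 0\<close> by simp
  qed
  ultimately show ?thesis
    using assms by (intro sums_nonneg_imp_has_sum) (auto intro!: sum_nonneg mult_nonneg_nonneg)
qed

lemma has_sum_alternating_geometric:
  fixes u c :: real
  assumes "0 < c" "\<bar>u\<bar> < c"
  shows "((\<lambda>m. (-1) ^ m * u ^ (m + 1) / c ^ (m + 2)) has_sum (u / (c * (c + u)))) UNIV"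
proof -
  have r: "norm (- u / c) < 1" using assms by (simp add: abs_divide)
  have sums: "(\<lambda>m. u / c ^ 2 * (- u / c) ^ m) sums (u / c ^ 2 * (1 / (1 - (- u / c))))"
    using r by (intro sums_mult geometric_sums)
  have "summable (\<lambda>m. norm (u / c ^ 2) * norm (- u / c) ^ m)"
    using r by (intro summable_mult summable_geometric) simp
  then have summable: "summable (\<lambda>m. norm (u / c ^ 2 * (- u / c) ^ m))"
    by (simp only: norm_mult norm_power)
  have term_eq: "u / c ^ 2 * (- u / c) ^ m = (-1) ^ m * u ^ (m + 1) / c ^ (m + 2)" for m
    using assms by (simp add: power_minus[of "u / c"] power_divide power2_eq_square field_simps)
  have "1 - (- u / c) = (c + u) / c"
    using assms by (simp add: field_simps)
  then have "u / c ^ 2 * (1 / (1 - (- u / c))) = u / c ^ 2 * (c / (c + u))"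
    by simp
  also have "\<dots> = u / (c * (c + u))"
    using assms by (simp add: power2_eq_square)
  finally have value_eq: "u / c ^ 2 * (1 / (1 - (- u / c))) = u / (c * (c + u))" .
  from norm_summable_imp_has_sum[OF summable sums] show ?thesis
    by (simp only: term_eq value_eq)
qed

lemma sum_Pow_signed_prod:
  fixes s :: real
  assumes "finite A"
  shows "(\<Sum>X\<in>Pow A. (-1) ^ card X * s ^ (card X + 1) * (\<Prod>j\<in>X. g j)) = s * (\<Prod>j\<in>A. 1 - s * g j)"
proof -
  have "(\<Prod>j\<in>A. - s * g j + 1) = (\<Sum>X\<in>Pow A. (\<Prod>j\<in>X. - s * g j) * (\<Prod>j\<in>A - X. 1))"
    by (rule prod_add[OF assms])
  also have "\<dots> = (\<Sum>X\<in>Pow A. (-1) ^ card X * s ^ card X * (\<Prod>j\<in>X. g j))"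
    by (intro sum.cong refl) (simp only: prod.distrib prod_constant power_minus[of s] power_one mult_1_right)
  finally show ?thesis
    by (simp add: sum_distrib_left mult_ac)
qed

section \<open>A double series evaluated by the q-binomial theorem\<close>

lemma qpochhammer_inf_shift_ratio:
  fixes q b :: real
  assumes q: "0 < q" "q < 1" and b: "b * q < 1" "b \<noteq> 1" and r: "0 < r"
  shows "qpochhammer_inf q (q * q ^ r) / qpochhammer_inf q (b * q ^ r)
           = qpochhammer_inf q q / qpochhammer_inf q (b * q) * (qpochhammer q b r / qpochhammer q q r) / (1 - b)"
proof -
  obtain m where m: "r = Suc m" using r gr0_implies_Suc by blast
  have bqr: "b * q ^ r < 1"
    using mult_power_less_one[of q "b * q" m] q b by (simp add: m mult_ac)
  have "qpochhammer_inf q q = qpochhammer q q r * qpochhammer_inf q (q * q ^ r)"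
    using q by (intro qpochhammer_inf_split) auto
  moreover have "qpochhammer_inf q (b * q) = qpochhammer q (b * q) m * qpochhammer_inf q (b * q ^ r)"
    using qpochhammer_inf_split[of q "b * q" m] q b by (simp add: m mult_ac)
  moreover have "qpochhammer q b r = (1 - b) * qpochhammer q (b * q) m"
    by (simp add: m qpochhammer_Suc_shift)
  ultimately have "qpochhammer_inf q q / qpochhammer_inf q (b * q) * (qpochhammer q b r / qpochhammer q q r) / (1 - b)
      = (qpochhammer q q r * qpochhammer_inf q (q * q ^ r))
        / (qpochhammer q (b * q) m * qpochhammer_inf q (b * q ^ r))
        * ((1 - b) * qpochhammer q (b * q) m / qpochhammer q q r) / (1 - b)"
    by simp
  moreover have "qpochhammer q q r > 0" "qpochhammer q (b * q) m > 0"
    using q b by (auto intro!: qpochhammer_pos)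
  moreover have "qpochhammer_inf q (b * q ^ r) \<noteq> 0"
    using q bqr by (intro qpochhammer_inf_nonzero) auto
  ultimately show ?thesis
    using b by simp
qed

lemma qbinomial_coeff_nonneg:
  fixes q b :: real
  assumes "0 < q" "q < 1" "q < b"
  shows "0 \<le> qpochhammer q (q / b) n / qpochhammer q q n * b ^ n"
proof -
  have "qpochhammer q (q / b) n > 0" "qpochhammer q q n > 0"
    using assms by (auto intro!: qpochhammer_pos)
  then show ?thesis
    using assms by simp
qed

lemma has_sum_qbinomial_power_shift:
  fixes q b :: real
  assumes q: "0 < q" "q < 1" and b: "q < b" "b * q < 1" "b \<noteq> 1" and r: "0 < r"
  shows "((\<lambda>n. qpochhammer q (q / b) n / qpochhammer q q n * b ^ n * (q ^ Suc n) ^ r)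
           has_sum (qpochhammer_inf q q / qpochhammer_inf q (b * q)
                    * (q ^ r * (qpochhammer q b r / qpochhammer q q r)) / (1 - b))) UNIV"
proof -
  have "0 < b"
    using q b by simp
  have "q ^ r \<le> q ^ 1"
    using q r by (intro power_decreasing) auto
  then have "b * q ^ r \<le> b * q"
    using \<open>0 < b\<close> by simp
  moreover have "0 < b * q ^ r"
    using q b by simp
  ultimately have "\<bar>b * q ^ r\<bar> < 1"
    using b by linarith
  from qbinomial_theorem[OF q this, of "q / b"]
  have sums: "(\<lambda>n. q ^ r * (qpochhammer q (q / b) n / qpochhammer q q n * (b * q ^ r) ^ n))
                sums (q ^ r * (qpochhammer_inf q (q * q ^ r) / qpochhammer_inf q (b * q ^ r)))"
    using \<open>0 < b\<close> by (intro sums_mult) simp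
  have term_eq: "q ^ r * (qpochhammer q (q / b) n / qpochhammer q q n * (b * q ^ r) ^ n)
                   = qpochhammer q (q / b) n / qpochhammer q q n * b ^ n * (q ^ Suc n) ^ r" for n
  proof -
    have "(q ^ Suc n) ^ r = q ^ (r + r * n)"
      by (simp add: power_mult[symmetric] power_add algebra_simps)
    also have "\<dots> = q ^ r * (q ^ r) ^ n"
      by (simp add: power_add power_mult)
    finally show ?thesis
      by (simp only: power_mult_distrib mult_ac)
  qed
  have value_eq: "q ^ r * (qpochhammer_inf q (q * q ^ r) / qpochhammer_inf q (b * q ^ r))
                    = qpochhammer_inf q q / qpochhammer_inf q (b * q)
                      * (q ^ r * (qpochhammer q b r / qpochhammer q q r)) / (1 - b)"
    unfolding qpochhammer_inf_shift_ratio[OF q b(2,3) r] by (simp add: mult_ac)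
  from sums have "(\<lambda>n. qpochhammer q (q / b) n / qpochhammer q q n * b ^ n * (q ^ Suc n) ^ r)
                   sums (qpochhammer_inf q q / qpochhammer_inf q (b * q)
                         * (q ^ r * (qpochhammer q b r / qpochhammer q q r)) / (1 - b))"
    unfolding term_eq value_eq .
  then show ?thesis
    by (rule sums_nonneg_imp_has_sum) (rule mult_nonneg_nonneg[OF qbinomial_coeff_nonneg[OF q b(1)]], use q in simp)
qed

lemma sums_qbinomial_gp_weighted:
  fixes q a b :: real
  assumes q: "0 < q" "q < 1" and a: "0 < a" "a * q < 1" "a \<noteq> 1"
  shows "(\<lambda>r. (\<Sum>i<r. a ^ i) * (q ^ r * (qpochhammer q b r / qpochhammer q q r)))
           sums ((qpochhammer_inf q (b * q) / qpochhammer_inf q q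
                  - qpochhammer_inf q (a * b * q) / qpochhammer_inf q (a * q)) / (1 - a))"
proof -
  have "\<bar>q\<bar> < 1" "\<bar>a * q\<bar> < 1"
    using a q by (auto simp: abs_mult)
  from sums_divide[OF sums_diff[OF qbinomial_theorem[OF q this(1)] qbinomial_theorem[OF q this(2)]], of b b "1 - a"]
  have "(\<lambda>r. (qpochhammer q b r / qpochhammer q q r * q ^ r
              - qpochhammer q b r / qpochhammer q q r * (a * q) ^ r) / (1 - a))
          sums ((qpochhammer_inf q (b * q) / qpochhammer_inf q q
                - qpochhammer_inf q (b * (a * q)) / qpochhammer_inf q (a * q)) / (1 - a))" .
  moreover have "(qpochhammer q b r / qpochhammer q q r * q ^ r
                    - qpochhammer q b r / qpochhammer q q r * (a * q) ^ r) / (1 - a)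
                   = (\<Sum>i<r. a ^ i) * (q ^ r * (qpochhammer q b r / qpochhammer q q r))" for r
    using a qpochhammer_pos[of q q r] q by (simp add: sum_gp_strict power_mult_distrib field_simps)
  moreover have "b * (a * q) = a * b * q"
    by simp
  ultimately show ?thesis
    by simp
qed

lemma qbinomial_double_series:
  fixes q a b :: real
  assumes q: "0 < q" "q < 1"
    and a: "q < a" "a * q < 1" "a \<noteq> 1" and b: "q < b" "b * q < 1" "b \<noteq> 1"
  shows "((\<lambda>n. (1 - a) * (1 - b) * (qpochhammer q (q / b) n / qpochhammer q q n * b ^ n)
              * (q ^ Suc n / ((1 - q ^ Suc n) * (1 - a * q ^ Suc n))))
          has_sum (1 - qpochhammer_inf q q * qpochhammer_inf q (a * b * q)
                       / (qpochhammer_inf q (a * q) * qpochhammer_inf q (b * q)))) UNIV"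
proof -
  have "0 < a" "0 < b" "(1 - a) * (1 - b) \<noteq> 0" using q a b by auto
  define Q where "Q n = qpochhammer q (q / b) n / qpochhammer q q n * b ^ n" for n
  define G where "G r = (\<Sum>i<r. a ^ i)" for r
  define W where "W r = q ^ r * (qpochhammer q b r / qpochhammer q q r)" for r
  define K where "K = qpochhammer_inf q q / qpochhammer_inf q (b * q)"
  define L where "L = qpochhammer_inf q (b * q) / qpochhammer_inf q q
                        - qpochhammer_inf q (a * b * q) / qpochhammer_inf q (a * q)"
  define H where "H r n = G r * (Q n * (q ^ Suc n) ^ r)" for r n
  (* Summing H over r gives the n-th term of the series, summing it over n gives a multiple of G r * W r. *)
  have nonneg: "H r n \<ge> 0" for r n
  proof -
    have "0 \<le> G r" "0 \<le> Q n"
      unfolding G_def Q_def using qbinomial_coeff_nonneg[OF q b(1)] \<open>0 < a\<close> by (auto intro: sum_nonneg)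
    then show ?thesis
      using q by (simp add: H_def)
  qed
  have rows: "(H r has_sum (K / (1 - b) * (G r * W r))) UNIV" for r
  proof (cases "r = 0")
    case False
    from has_sum_cmult_right[OF has_sum_qbinomial_power_shift[OF q b False[unfolded neq0_conv]], of "G r"]
    show ?thesis
      by (simp add: H_def[abs_def] Q_def K_def W_def mult_ac)
  qed (simp add: H_def[abs_def] G_def)
  have "(\<lambda>r. K / (1 - b) * (G r * W r)) sums (K / (1 - b) * (L / (1 - a)))"
    unfolding G_def W_def L_def using sums_qbinomial_gp_weighted[OF q \<open>0 < a\<close> a(2,3)] by (rule sums_mult)
  then have R: "((\<lambda>r. K / (1 - b) * (G r * W r)) has_sum (K / (1 - b) * (L / (1 - a)))) UNIV"
    by (rule sums_nonneg_imp_has_sum) (rule has_sum_nonneg[OF rows], rule nonneg)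
  have cols: "((\<lambda>r. H r n) has_sum (Q n * (q ^ Suc n / ((1 - q ^ Suc n) * (1 - a * q ^ Suc n))))) UNIV"
    for n
  proof -
    have "a * q ^ Suc n < 1"
      using mult_power_less_one[of q "a * q" n] q a by (simp add: mult.assoc)
    then have "((\<lambda>r. G r * (q ^ Suc n) ^ r)
                  has_sum (q ^ Suc n / ((1 - q ^ Suc n) * (1 - a * q ^ Suc n)))) UNIV"
      unfolding G_def using q a \<open>0 < a\<close> power_Suc_less_one[OF q, of n]
      by (intro has_sum_gp_sum_times_power) auto
    from has_sum_cmult_right[OF this, of "Q n"] show ?thesis
      by (simp add: H_def mult_ac)
  qed
  from has_sum_cmult_right[OF has_sum_swap_nonneg[OF nonneg rows R cols], of "(1 - a) * (1 - b)"]
  have "((\<lambda>n. (1 - a) * (1 - b) * Q n * (q ^ Suc n / ((1 - q ^ Suc n) * (1 - a * q ^ Suc n))))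
          has_sum (K * L)) UNIV"
    using \<open>(1 - a) * (1 - b) \<noteq> 0\<close> by (simp add: mult_ac)
  moreover have "K * L = 1 - qpochhammer_inf q q * qpochhammer_inf q (a * b * q)
                               / (qpochhammer_inf q (a * q) * qpochhammer_inf q (b * q))"
    using qpochhammer_inf_nonzero[of q q] qpochhammer_inf_nonzero[of q "b * q"] q b
    by (simp add: K_def L_def field_simps)
  ultimately show ?thesis
    by (simp add: Q_def)
qed

section \<open>Multiple q-zeta values as sums over chains\<close>

lemma distinct_of_sorted_wrt_greater:
  fixes xs :: "'a :: linorder list"
  assumes "sorted_wrt (>) xs"
  shows "distinct xs"
  using assms by (induction xs) auto

lemma sorted_list_of_set_of_sorted_wrt_greater:
  fixes xs :: "'a :: linorder list"
  assumes "sorted_wrt (>) xs"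
  shows "sorted_list_of_set (set xs) = rev xs"
  using assms distinct_of_sorted_wrt_greater[OF assms]
  by (subst sorted_list_of_set_unique[symmetric]) (auto simp: sorted_wrt_rev distinct_card)

(* A chain k_1 > ... > k_(n+1) > 0 is encoded as the pair (k_1, {k_2, ..., k_(n+1)}). *)
definition zeta_index :: "nat \<Rightarrow> (nat \<times> nat set) set" where
  "zeta_index n = {(k, S). 0 < k \<and> S \<subseteq> {1..<k} \<and> card S = n}"

lemma bij_betw_zeta_index:
  "bij_betw (\<lambda>(k, S). k # rev (sorted_list_of_set S)) (zeta_index n)
     {ks. length ks = Suc n \<and> sorted_wrt (>) ks \<and> (\<forall>k\<in>set ks. 0 < k)}"
proof (rule bij_betwI[where g = "\<lambda>ks. (hd ks, set (tl ks))"])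
  show "(\<lambda>(k, S). k # rev (sorted_list_of_set S)) \<in> zeta_index n
          \<rightarrow> {ks. length ks = Suc n \<and> sorted_wrt (>) ks \<and> (\<forall>k\<in>set ks. 0 < k)}"
  proof
    fix p assume "p \<in> zeta_index n"
    then obtain k S where p: "p = (k, S)" "0 < k" "S \<subseteq> {1..<k}" "card S = n"
      by (auto simp: zeta_index_def)
    then have "finite S" by (meson finite_atLeastLessThan finite_subset)
    then show "(case p of (k, S) \<Rightarrow> k # rev (sorted_list_of_set S))
                 \<in> {ks. length ks = Suc n \<and> sorted_wrt (>) ks \<and> (\<forall>k\<in>set ks. 0 < k)}"
      using p by (auto simp: sorted_wrt_rev)
  qed
  show "(\<lambda>ks. (hd ks, set (tl ks)))
          \<in> {ks. length ks = Suc n \<and> sorted_wrt (>) ks \<and> (\<forall>k\<in>set ks. 0 < k)} \<rightarrow> zeta_index n"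
  proof
    fix ks :: "nat list" assume ks: "ks \<in> {ks. length ks = Suc n \<and> sorted_wrt (>) ks \<and> (\<forall>k\<in>set ks. 0 < k)}"
    then obtain k ks' where "ks = k # ks'" by (cases ks) auto
    with ks show "(hd ks, set (tl ks)) \<in> zeta_index n"
      using distinct_of_sorted_wrt_greater[of ks'] by (auto simp: zeta_index_def distinct_card)
  qed
  show "(\<lambda>ks. (hd ks, set (tl ks))) ((\<lambda>(k, S). k # rev (sorted_list_of_set S)) p) = p"
    if "p \<in> zeta_index n" for p
    using that finite_subset[of _ "{1..<fst p}"] by (auto simp: zeta_index_def)
  show "(\<lambda>(k, S). k # rev (sorted_list_of_set S)) ((\<lambda>ks. (hd ks, set (tl ks))) ks) = ks"
    if "ks \<in> {ks. length ks = Suc n \<and> sorted_wrt (>) ks \<and> (\<forall>k\<in>set ks. 0 < k)}" for ks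
    using that sorted_list_of_set_of_sorted_wrt_greater[of "tl ks"] by (cases ks) auto
qed

lemma prod_nth_eq_prod_set:
  assumes "distinct xs"
  shows "(\<Prod>j<length xs. g (xs ! j)) = (\<Prod>x\<in>set xs. g x)"
  using prod.reindex_bij_betw[OF bij_betw_nth[OF assms refl refl], of g] by simp

definition zeta_summand :: "real \<Rightarrow> nat \<Rightarrow> nat \<times> nat set \<Rightarrow> real" where
  "zeta_summand q m p = (case p of (k, S) \<Rightarrow>
     q ^ ((m + 1) * k) / qbr q (real k) ^ (m + 2) * (\<Prod>j\<in>S. 1 / qbr q (real j)))"

lemma qzeta_eq_infsum_zeta_summand:
  "qzeta q ((m + 2) # replicate n 1) = infsum (zeta_summand q m) (zeta_index n)"
proof -
  let ?s = "(m + 2) # replicate n 1"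
  let ?f = "\<lambda>ks. \<Prod>j<length ?s. q ^ ((?s ! j - 1) * (ks ! j)) / qbr q (real (ks ! j)) ^ (?s ! j)"
  have "qzeta q ?s = infsum ?f {ks. length ks = Suc n \<and> sorted_wrt (>) ks \<and> (\<forall>k\<in>set ks. 0 < k)}"
    by (simp add: qzeta_def)
  also have "\<dots> = infsum (\<lambda>(k, S). ?f (k # rev (sorted_list_of_set S))) (zeta_index n)"
    using infsum_reindex_bij_betw[OF bij_betw_zeta_index, symmetric] by (simp add: case_prod_unfold)
  also have "\<dots> = infsum (zeta_summand q m) (zeta_index n)"
  proof (rule infsum_cong, clarify)
    fix k S assume "(k, S) \<in> zeta_index n"
    then have S: "finite S" "card S = n"
      using finite_subset[of S "{1..<k}"] by (auto simp: zeta_index_def)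
    define xs where "xs = rev (sorted_list_of_set S)"
    have xs: "distinct xs" "set xs = S" "length xs = n"
      using S by (auto simp: xs_def)
    have "?f (k # xs) = q ^ ((m + 1) * k) / qbr q (real k) ^ (m + 2) * (\<Prod>j<length xs. 1 / qbr q (real (xs ! j)))"
      using xs by (simp only: length_Cons length_replicate prod.lessThan_Suc_shift) (auto intro!: prod.cong)
    then show "?f (k # rev (sorted_list_of_set S)) = zeta_summand q m (k, S)"
      using prod_nth_eq_prod_set[OF xs(1), of "\<lambda>x. 1 / qbr q (real x)"] xs
      by (simp add: zeta_summand_def xs_def)
  qed
  finally show ?thesis .
qed

lemma disjoint_family_zeta_index: "disjoint_family zeta_index"
  by (auto simp: disjoint_family_on_def zeta_index_def)

section \<open>The triple series\<close>

lemma qbr_of_nat: "0 < q \<Longrightarrow> qbr q (real k) = (1 - q ^ k) / (1 - q)"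
  by (simp add: qbr_def powr_realpow)

lemma qbr_pos: "0 < q \<Longrightarrow> q < 1 \<Longrightarrow> 0 < k \<Longrightarrow> 0 < qbr q (real k)"
  by (simp add: qbr_of_nat power_less_one_iff)

lemma one_minus_div_qbr:
  fixes q b :: real
  assumes "0 < q" "q < 1" "0 < j"
  shows "1 - (1 - b) / (1 - q) / qbr q (real j) = (b - q ^ j) / (1 - q ^ j)"
proof -
  have "q ^ j < 1"
    using assms by (simp add: power_less_one_iff)
  then have "1 - q \<noteq> 0" "1 - q ^ j \<noteq> 0"
    using assms by auto
  then have ratio: "(1 - b) / (1 - q) / qbr q (real j) = (1 - b) / (1 - q ^ j)"
    using assms by (simp add: qbr_of_nat)
  have "1 - (1 - b) / (1 - q ^ j) = (b - q ^ j) / (1 - q ^ j)"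
    using \<open>1 - q ^ j \<noteq> 0\<close> by (simp add: field_simps)
  then show ?thesis
    unfolding ratio .
qed

lemma prod_eq_qpochhammer_ratio:
  fixes q b :: real
  assumes "0 < q" "q < 1" "b \<noteq> 0"
  shows "(\<Prod>j\<in>{1..n}. (b - q ^ j) / (1 - q ^ j)) = qpochhammer q (q / b) n / qpochhammer q q n * b ^ n"
proof (induction n)
  case (Suc n)
  define X where "X = qpochhammer q (q / b) n"
  define Z where "Z = qpochhammer q q n"
  have "Z > 0" "1 - q ^ Suc n \<noteq> 0"
    using assms by (auto simp: Z_def intro!: qpochhammer_pos simp del: power_Suc
        dest: power_Suc_less_one[of q n])
  have "qpochhammer q (q / b) (Suc n) / qpochhammer q q (Suc n) * b ^ Suc n
          = X * (1 - q / b * q ^ n) / (Z * (1 - q ^ Suc n)) * (b ^ n * b)"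
    by (simp add: qpochhammer_Suc X_def Z_def mult_ac)
  also have "\<dots> = X / Z * b ^ n * ((1 - q / b * q ^ n) * b / (1 - q ^ Suc n))"
    using \<open>Z > 0\<close> \<open>1 - q ^ Suc n \<noteq> 0\<close> by (simp add: divide_simps del: power_Suc)
  also have "(1 - q / b * q ^ n) * b = b - q ^ Suc n"
    using assms by (simp add: field_simps)
  finally show ?case
    using Suc.IH by (simp add: X_def Z_def del: power_Suc)
qed simp

lemma zeta_summand_nonneg:
  fixes q :: real
  assumes "0 < q" "q < 1" "0 < k" "S \<subseteq> {1..<k}"
  shows "zeta_summand q m (k, S) \<ge> 0"
proof -
  have "0 < qbr q (real j)" if "j \<in> S" for j
    using assms that by (intro qbr_pos) auto
  then have "0 \<le> (\<Prod>j\<in>S. 1 / qbr q (real j))"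
    by (auto intro!: prod_nonneg simp: less_imp_le)
  then show ?thesis
    using assms qbr_pos[of q k] by (simp add: zeta_summand_def)
qed

lemma one_plus_abs_diff_mult_less_one:
  fixes q a :: real
  assumes "0 < q" "q < a" "a * q < 1"
  shows "(1 + \<bar>1 - a\<bar>) * q < 1"
proof (cases "a \<ge> 1")
  case False
  have "(2 - a) * q < (2 - q) * q"
    using assms by (intro mult_strict_right_mono) auto
  also have "\<dots> \<le> 1"
    using zero_le_power2[of "1 - q"] by (simp add: power2_eq_square algebra_simps)
  finally show ?thesis using False by simp
qed (use assms in simp)

definition zeta_series_term :: "real \<Rightarrow> real \<Rightarrow> real \<Rightarrow> nat \<times> nat \<times> nat set \<Rightarrow> real" where
  "zeta_series_term q t s p = (case p of (m, k, S) \<Rightarrow>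
     (-1) ^ (m + card S) * t ^ (m + 1) * s ^ (card S + 1) * zeta_summand q m (k, S))"

lemma zeta_series_term_abs:
  fixes q t s :: real
  assumes "0 < q" "q < 1" "0 < k" "S \<subseteq> {1..<k}"
  shows "\<bar>zeta_series_term q t s (m, k, S)\<bar> = zeta_series_term q (- \<bar>t\<bar>) (- \<bar>s\<bar>) (m, k, S)"
proof -
  have "(-1::real) ^ (m + card S) * (-1) ^ (m + 1) * (-1) ^ (card S + 1) = (-1) ^ (2 * (m + card S + 1))"
    by (simp flip: power_add) (simp add: algebra_simps)
  then have sign: "(-1::real) ^ (m + card S) * (-1) ^ (m + 1) * (-1) ^ (card S + 1) = 1"
    by (simp only: power_mult) simp
  have "zeta_series_term q (- \<bar>t\<bar>) (- \<bar>s\<bar>) (m, k, S)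
          = ((-1) ^ (m + card S) * (-1) ^ (m + 1) * (-1) ^ (card S + 1))
            * (\<bar>t\<bar> ^ (m + 1) * \<bar>s\<bar> ^ (card S + 1) * zeta_summand q m (k, S))"
    by (simp only: zeta_series_term_def prod.case power_minus[of "\<bar>t\<bar>"] power_minus[of "\<bar>s\<bar>"] mult_ac)
  also have "\<dots> = \<bar>t\<bar> ^ (m + 1) * \<bar>s\<bar> ^ (card S + 1) * zeta_summand q m (k, S)"
    by (simp only: sign mult_1_left)
  also have "\<dots> = \<bar>zeta_series_term q t s (m, k, S)\<bar>"
    using zeta_summand_nonneg[OF assms, of m]
    by (simp add: zeta_series_term_def abs_mult power_abs)
  finally show ?thesis ..
qed

lemma has_sum_geometric_qbr:
  fixes q a :: real
  assumes q: "0 < q" "q < 1" and a: "q < a" "a * q < 1" and k: "0 < k"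
  shows "((\<lambda>m. (-1) ^ m * ((1 - a) / (1 - q) * q ^ k) ^ (m + 1) / qbr q (real k) ^ (m + 2))
          has_sum ((1 - a) * (1 - q) * q ^ k / ((1 - q ^ k) * (1 - a * q ^ k)))) UNIV"
proof -
  define c where "c = qbr q (real k)"
  define u where "u = (1 - a) / (1 - q) * q ^ k"
  have qk: "0 < q ^ k" "q ^ k < 1" "q ^ k \<le> q"
    using q k power_decreasing[of 1 k q] by (auto simp: power_less_one_iff)
  have c: "c = (1 - q ^ k) / (1 - q)" "0 < c"
    using q qk by (auto simp: c_def qbr_of_nat)
  have "(1 + \<bar>1 - a\<bar>) * q ^ k \<le> (1 + \<bar>1 - a\<bar>) * q"
    using qk by (intro mult_left_mono) auto
  then have "\<bar>1 - a\<bar> * q ^ k / (1 - q) < (1 - q ^ k) / (1 - q)"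
    using q one_plus_abs_diff_mult_less_one[OF q(1) a] by (intro divide_strict_right_mono) (auto simp: algebra_simps)
  then have "\<bar>u\<bar> < c"
    using q qk by (simp add: u_def c(1) abs_mult abs_divide)
  moreover have "a * q ^ k \<le> a * q"
    using a q qk by (intro mult_left_mono) auto
  then have "1 - a * q ^ k \<noteq> 0"
    using a by linarith
  moreover have "1 - q ^ k \<noteq> 0" "1 - q \<noteq> 0"
    using q qk by auto
  moreover have "c + u = (1 - a * q ^ k) / (1 - q)"
    using q by (simp add: c u_def field_simps)
  ultimately have value_eq: "u / (c * (c + u)) = (1 - a) * (1 - q) * q ^ k / ((1 - q ^ k) * (1 - a * q ^ k))"
    by (simp add: c(1) u_def divide_simps)
  from has_sum_alternating_geometric[OF c(2) \<open>\<bar>u\<bar> < c\<close>] show ?thesis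
    unfolding value_eq unfolding u_def c_def .
qed

lemma sum_Pow_qbr_eq_qpochhammer:
  fixes q b :: real
  assumes q: "0 < q" "q < 1" and b: "0 < b"
  shows "(\<Sum>S\<in>Pow {1..n}. (-1) ^ card S * ((1 - b) / (1 - q)) ^ (card S + 1) * (\<Prod>j\<in>S. 1 / qbr q (real j)))
           = (1 - b) / (1 - q) * (qpochhammer q (q / b) n / qpochhammer q q n * b ^ n)"
proof -
  define s where "s = (1 - b) / (1 - q)"
  have "(\<Sum>S\<in>Pow {1..n}. (-1) ^ card S * s ^ (card S + 1) * (\<Prod>j\<in>S. 1 / qbr q (real j)))
          = s * (\<Prod>j\<in>{1..n}. 1 - s * (1 / qbr q (real j)))"
    by (rule sum_Pow_signed_prod) simp
  also have "(\<Prod>j\<in>{1..n}. 1 - s * (1 / qbr q (real j))) = (\<Prod>j\<in>{1..n}. (b - q ^ j) / (1 - q ^ j))"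
    using one_minus_div_qbr[OF q, of _ b] by (intro prod.cong refl) (simp add: s_def)
  finally show ?thesis
    using prod_eq_qpochhammer_ratio[OF q] b by (simp add: s_def)
qed

lemma has_sum_zeta_series_column:
  fixes q a b :: real
  assumes q: "0 < q" "q < 1" and a: "q < a" "a * q < 1" and b: "0 < b"
  shows "((\<lambda>(m, S). zeta_series_term q ((1 - a) / (1 - q)) ((1 - b) / (1 - q)) (m, Suc n, S))
          has_sum ((1 - a) * (1 - b) * (qpochhammer q (q / b) n / qpochhammer q q n * b ^ n)
                   * (q ^ Suc n / ((1 - q ^ Suc n) * (1 - a * q ^ Suc n))))) (UNIV \<times> Pow {1..n})"
proof -
  define t where "t = (1 - a) / (1 - q)"
  define s where "s = (1 - b) / (1 - q)"
  define f where "f m = (-1) ^ m * (t * q ^ Suc n) ^ (m + 1) / qbr q (real (Suc n)) ^ (m + 2)" for m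
  define g where "g S = (-1) ^ card S * s ^ (card S + 1) * (\<Prod>j\<in>S. 1 / qbr q (real j))" for S
  define Q where "Q = qpochhammer q (q / b) n / qpochhammer q q n * b ^ n"
  define r where "r = q ^ Suc n"
  have "(f has_sum ((1 - a) * (1 - q) * r / ((1 - r) * (1 - a * r)))) UNIV"
    unfolding f_def t_def r_def using q a by (rule has_sum_geometric_qbr) simp
  from has_sum_times_finite[OF this, of "Pow {1..n}" g]
  have "((\<lambda>(m, S). f m * g S) has_sum ((1 - a) * (1 - q) * r / ((1 - r) * (1 - a * r)) * sum g (Pow {1..n})))
          (UNIV \<times> Pow {1..n})"
    by simp
  moreover have "sum g (Pow {1..n}) = s * Q"
    unfolding g_def s_def Q_def by (rule sum_Pow_qbr_eq_qpochhammer[OF q b])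
  moreover have "(1 - a) * (1 - q) * r / ((1 - r) * (1 - a * r)) * (s * Q)
                   = (1 - a) * (1 - b) * Q * (r / ((1 - r) * (1 - a * r)))"
    using q by (simp add: s_def)
  moreover have "(\<lambda>(m, S). f m * g S) = (\<lambda>(m, S). zeta_series_term q t s (m, Suc n, S))"
    by (simp add: fun_eq_iff zeta_series_term_def zeta_summand_def f_def g_def power_mult_distrib
        power_mult[symmetric] power_add mult_ac)
  ultimately show ?thesis
    unfolding t_def s_def Q_def r_def by (simp only:)
qed

lemma bij_betw_zeta_columns:
  "bij_betw (\<lambda>(n, m, S). (m, Suc n, S)) (SIGMA n:UNIV. UNIV \<times> Pow {1..n}) (UNIV \<times> (\<Union>n. zeta_index n))"
  by (rule bij_betwI[where g = "\<lambda>(m, k, S). (k - 1, m, S)"])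
     (auto simp: zeta_index_def subset_iff less_Suc_eq_le)

lemma summable_zeta_series_term:
  fixes q a b :: real
  assumes q: "0 < q" "q < 1"
    and a: "q < a" "a * q < 1" "a \<noteq> 1" and b: "q < b" "b * q < 1" "b \<noteq> 1"
  shows "zeta_series_term q ((1 - a) / (1 - q)) ((1 - b) / (1 - q)) summable_on (UNIV \<times> (\<Union>n. zeta_index n))"
proof -
  define t where "t = (1 - a) / (1 - q)"
  define s where "s = (1 - b) / (1 - q)"
  define a' where "a' = 1 + \<bar>1 - a\<bar>"
  define b' where "b' = 1 + \<bar>1 - b\<bar>"
  have a': "q < a'" "a' * q < 1" "a' \<noteq> 1"
    using one_plus_abs_diff_mult_less_one[OF q(1) a(1,2)] a q by (auto simp: a'_def)
  have b': "q < b'" "b' * q < 1" "b' \<noteq> 1"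
    using one_plus_abs_diff_mult_less_one[OF q(1) b(1,2)] b q by (auto simp: b'_def)
  have ts': "(1 - a') / (1 - q) = - \<bar>t\<bar>" "(1 - b') / (1 - q) = - \<bar>s\<bar>"
    using q by (simp_all add: a'_def b'_def t_def s_def abs_divide)
  (* G is the family of absolute values, and it is the same family for the parameters a', b'. *)
  define G where "G = zeta_series_term q (- \<bar>t\<bar>) (- \<bar>s\<bar>)"
  define C where "C n = (1 - a') * (1 - b') * (qpochhammer q (q / b') n / qpochhammer q q n * b' ^ n)
                        * (q ^ Suc n / ((1 - q ^ Suc n) * (1 - a' * q ^ Suc n)))" for n
  have "(\<lambda>(n, m, S). G (m, Suc n, S)) summable_on (SIGMA n:UNIV. UNIV \<times> Pow {1..n})"
  proof (rule summable_on_SigmaI[where g = C])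
    show "((\<lambda>y. (\<lambda>(n, m, S). G (m, Suc n, S)) (n, y)) has_sum C n) (UNIV \<times> Pow {1..n})" for n
      using has_sum_zeta_series_column[OF q a'(1,2), of b' n] q b' unfolding ts'
      by (simp add: G_def C_def case_prod_unfold)
    show "C summable_on UNIV"
      using qbinomial_double_series[OF q a' b'] unfolding C_def by (rule has_sum_imp_summable)
    show "0 \<le> (\<lambda>(n, m, S). G (m, Suc n, S)) (n, y)" if y_mem: "y \<in> UNIV \<times> Pow {1..n}" for n y
    proof -
      obtain m S where y: "y = (m, S)" "S \<subseteq> {1..<Suc n}"
        using y_mem by (cases y) (auto simp: atLeastLessThanSuc_atLeastAtMost)
      show ?thesis
        using zeta_series_term_abs[OF q _ y(2), of t s m] by (simp add: G_def y)
    qed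
  qed
  then have "G summable_on (UNIV \<times> (\<Union>n. zeta_index n))"
    using summable_on_reindex_bij_betw[OF bij_betw_zeta_columns, of G] by (simp add: case_prod_unfold)
  then have "(\<lambda>p. norm (zeta_series_term q t s p)) summable_on (UNIV \<times> (\<Union>n. zeta_index n))"
    by (rule summable_on_cong[THEN iffD1, rotated])
       (auto simp: G_def zeta_index_def zeta_series_term_abs[OF q])
  then show ?thesis
    unfolding t_def s_def using summable_on_iff_abs_summable_on_real by blast
qed

lemma has_sum_zeta_series_term:
  fixes q a b :: real
  assumes q: "0 < q" "q < 1"
    and a: "q < a" "a * q < 1" "a \<noteq> 1" and b: "q < b" "b * q < 1" "b \<noteq> 1"
  shows "(zeta_series_term q ((1 - a) / (1 - q)) ((1 - b) / (1 - q))
           has_sum (1 - qpochhammer_inf q q * qpochhammer_inf q (a * b * q)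
                        / (qpochhammer_inf q (a * q) * qpochhammer_inf q (b * q))))
           (UNIV \<times> (\<Union>n. zeta_index n))"
proof -
  define F where "F = zeta_series_term q ((1 - a) / (1 - q)) ((1 - b) / (1 - q))"
  define T where "T = infsum F (UNIV \<times> (\<Union>n. zeta_index n))"
  have "(F has_sum T) (UNIV \<times> (\<Union>n. zeta_index n))"
    unfolding F_def T_def using summable_zeta_series_term[OF q a b] by (rule has_sum_infsum)
  then have "((\<lambda>(n, m, S). F (m, Suc n, S)) has_sum T) (SIGMA n:UNIV. UNIV \<times> Pow {1..n})"
    using has_sum_reindex_bij_betw[OF bij_betw_zeta_columns, of F] by (simp add: case_prod_unfold)
  then have "((\<lambda>n. (1 - a) * (1 - b) * (qpochhammer q (q / b) n / qpochhammer q q n * b ^ n)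
                   * (q ^ Suc n / ((1 - q ^ Suc n) * (1 - a * q ^ Suc n)))) has_sum T) UNIV"
    by (rule has_sum_SigmaD)
       (use has_sum_zeta_series_column[OF q a(1,2)] q b in \<open>auto simp: F_def case_prod_unfold\<close>)
  then have "T = 1 - qpochhammer_inf q q * qpochhammer_inf q (a * b * q)
                       / (qpochhammer_inf q (a * q) * qpochhammer_inf q (b * q))"
    using qbinomial_double_series[OF q a b] by (rule has_sum_unique)
  with \<open>(F has_sum T) (UNIV \<times> (\<Union>n. zeta_index n))\<close> show ?thesis
    by (simp add: F_def)
qed

lemma infsum_zeta_series_term_zeta_index:
  "infsum (\<lambda>p. zeta_series_term q t s (m, p)) (zeta_index n)
     = (-1) ^ (m + n) * t ^ (m + 1) * s ^ (n + 1) * qzeta q ((m + 2) # replicate n 1)"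
proof -
  have "infsum (\<lambda>p. zeta_series_term q t s (m, p)) (zeta_index n)
          = infsum (\<lambda>p. (-1) ^ (m + n) * t ^ (m + 1) * s ^ (n + 1) * zeta_summand q m p) (zeta_index n)"
    by (intro infsum_cong) (auto simp: zeta_series_term_def zeta_index_def)
  then show ?thesis
    using qzeta_eq_infsum_zeta_summand[of q m n] by (simp add: infsum_cmult_right')
qed

lemma suminf_suminf_qzeta_eq:
  fixes q t s :: real
  assumes "(zeta_series_term q t s has_sum T) (UNIV \<times> (\<Union>n. zeta_index n))"
  shows "(\<Sum>m. \<Sum>n. (-1) ^ (m + n) * t ^ (m + 1) * s ^ (n + 1) * qzeta q ((m + 2) # replicate n 1)) = T"
proof -
  define I where "I = (\<Union>n. zeta_index n)"
  define F where "F m p = zeta_series_term q t s (m, p)" for m p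
  have total: "((\<lambda>(m, p). F m p) has_sum T) (UNIV \<times> I)"
    using assms by (simp add: F_def I_def)
  then have "(\<lambda>(m, p). F m p) summable_on UNIV \<times> I"
    by (rule has_sum_imp_summable)
  then have row_summable: "F m summable_on I" for m
    by (rule summable_on_SigmaD1) simp
  have "(F m has_sum ((-1) ^ (m + n) * t ^ (m + 1) * s ^ (n + 1) * qzeta q ((m + 2) # replicate n 1)))
          (zeta_index n)" for m n
  proof -
    have "F m summable_on zeta_index n"
      using row_summable by (rule summable_on_subset_banach) (auto simp: I_def)
    from has_sum_infsum[OF this] show ?thesis
      using infsum_zeta_series_term_zeta_index[of q t s m n] by (simp add: F_def[abs_def])
  qed
  then have "((\<lambda>n. (-1) ^ (m + n) * t ^ (m + 1) * s ^ (n + 1) * qzeta q ((m + 2) # replicate n 1))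
               has_sum infsum (F m) I) UNIV" for m
    unfolding I_def
    by (rule has_sum_UnionD[OF has_sum_infsum[OF row_summable[unfolded I_def]] disjoint_family_zeta_index])
  then have rows: "(\<Sum>n. (-1) ^ (m + n) * t ^ (m + 1) * s ^ (n + 1) * qzeta q ((m + 2) # replicate n 1))
                     = infsum (F m) I" for m
    by (rule has_sum_imp_sums[THEN sums_unique, symmetric])
  have "((\<lambda>m. infsum (F m) I) has_sum T) UNIV"
    using total by (rule has_sum_SigmaD) (use has_sum_infsum[OF row_summable] in simp)
  then show ?thesis
    unfolding rows by (rule has_sum_imp_sums[THEN sums_unique, symmetric])
qed

section \<open>Passing to q-Gamma values\<close>

lemma qzeta_double_series_eq_qpochhammer:
  fixes q a b :: real
  assumes q: "0 < q" "q < 1" and a: "q < a" "a * q < 1" and b: "q < b" "b * q < 1"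
  shows "(\<Sum>m. \<Sum>n. (-1) ^ (m + n) * ((1 - a) / (1 - q)) ^ (m + 1) * ((1 - b) / (1 - q)) ^ (n + 1)
            * qzeta q ((m + 2) # replicate n 1))
         = 1 - qpochhammer_inf q q * qpochhammer_inf q (a * b * q)
                 / (qpochhammer_inf q (a * q) * qpochhammer_inf q (b * q))"
proof (cases "a = 1 \<or> b = 1")
  case True
  (* The triple-series argument divides by (1 - a)(1 - b); here both sides vanish. *)
  have "qpochhammer_inf q q \<noteq> 0" "qpochhammer_inf q (a * q) \<noteq> 0" "qpochhammer_inf q (b * q) \<noteq> 0"
    using q a b by (simp_all add: qpochhammer_inf_nonzero)
  with True show ?thesis
    by auto
next
  case False
  then show ?thesis
    using suminf_suminf_qzeta_eq[OF has_sum_zeta_series_term[OF q a _ b]] by auto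
qed

lemma q_powr_bounds:
  fixes q x :: real
  assumes q: "0 < q" "q < 1" and x: "\<bar>x\<bar> < 1"
  shows "q < q powr x" "q powr x * q < 1"
proof -
  show "q < q powr x"
    using powr_less_mono'[OF q, of x 1] x q by simp
  have "q powr x * q = q powr (x + 1)"
    using q by (simp add: powr_add)
  also have "\<dots> < q powr 0"
    using x by (intro powr_less_mono'[OF q]) auto
  finally show "q powr x * q < 1"
    using q by simp
qed

lemma qGamma_one_plus:
  fixes q x :: real
  assumes "0 < q"
  shows "qGamma q (1 + x) = qpochhammer_inf q q * (1 - q) powr (- x) / qpochhammer_inf q (q powr x * q)"
  using assms by (simp add: qGamma_def qpoch_inf_eq_qpochhammer_inf powr_add mult.commute)

lemma qGamma_ratio:
  fixes q x y :: real
  assumes q: "0 < q" "q < 1" and x: "\<bar>x\<bar> < 1" and y: "\<bar>y\<bar> < 1"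
  shows "qGamma q (1 + x) * qGamma q (1 + y) / qGamma q (1 + x + y)
           = qpochhammer_inf q q * qpochhammer_inf q (q powr x * q powr y * q)
             / (qpochhammer_inf q (q powr x * q) * qpochhammer_inf q (q powr y * q))"
proof -
  have "qpochhammer_inf q q \<noteq> 0" "qpochhammer_inf q (q powr x * q) \<noteq> 0"
    "qpochhammer_inf q (q powr y * q) \<noteq> 0"
    using q q_powr_bounds[OF q x] q_powr_bounds[OF q y] by (simp_all add: qpochhammer_inf_nonzero)
  moreover have "(1 - q) powr (- (x + y)) = (1 - q) powr (- x) * (1 - q) powr (- y)"
    "(1 - q) powr (- x) > 0" "(1 - q) powr (- y) > 0"
    using q by (auto simp: powr_add[symmetric])
  moreover have "qGamma q (1 + x + y)
                   = qpochhammer_inf q q * (1 - q) powr (- (x + y)) / qpochhammer_inf q (q powr x * q powr y * q)"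
    using qGamma_one_plus[OF q(1), of "x + y"] q by (simp add: powr_add add.assoc)
  ultimately show ?thesis
    using q by (simp add: qGamma_one_plus field_simps)
qed

theorem theorem7p4:
  fixes q x y :: real
  assumes "0 < q" and "q < 1" and "\<bar>x\<bar> < 1" and "\<bar>y\<bar> < 1"
  shows "(\<Sum>m. \<Sum>n. (-1) ^ (m + n) * (qbr q x) ^ (m + 1) * (qbr q y) ^ (n + 1)
            * qzeta q ((m + 2) # replicate n 1))
         = 1 - qGamma q (1 + x) * qGamma q (1 + y) / qGamma q (1 + x + y)"
proof -
  have "qbr q x = (1 - q powr x) / (1 - q)" "qbr q y = (1 - q powr y) / (1 - q)"
    by (simp_all add: qbr_def)
  then show ?thesis
    using qzeta_double_series_eq_qpochhammer[OF assms(1,2) q_powr_bounds[OF assms(1,2,3)]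
        q_powr_bounds[OF assms(1,2,4)]] qGamma_ratio[OF assms]
    by simp
qed

end
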